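(* There exist constants $c_0 \geq c_1 > 0$ such that for all sufficiently large $N$ there is a non-feasible pair $(N,M)$ for the family of line graphs of acyclic graphs, and the smallest such $M$ satisfies \[\frac{N^2}{2} - c_0N\sqrt{N} \leq M \leq \frac{N^2}{2} - c_1N\sqrt{N}.\]
   Context: All graphs are finite and simple; $L(G)$ denotes the line graph of $G$. For integers $N \ge 1$ and $0\le M\le\binom{N}{2}$, the pair $(N,M)$ is feasible for the family of line graphs of acyclic graphs if there is an acyclic graph (forest) $F$ such that $L(F)$ has exactly $N$ vertices (i.e. $F$ has $N$ edges) and exactly $M$ edges; otherwise it is non-feasible. *)

theory Defs
  imports Complex_Main
begin

text \<open>Isolated vertices play no role for line graphs, so vertices are
  taken from the type nat (every finite graph is isomorphic to one on nat).\<close>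

definition simple_graph_edges :: "'a set set \<Rightarrow> bool" where
  "simple_graph_edges E \<longleftrightarrow> finite E \<and> (\<forall>e\<in>E. card e = 2)"

definition is_cycle :: "'a set set \<Rightarrow> 'a list \<Rightarrow> bool" where
  "is_cycle E vs \<longleftrightarrow> length vs \<ge> 3 \<and> distinct vs \<and>
     (\<forall>i < length vs. {vs ! i, vs ! ((i + 1) mod length vs)} \<in> E)"

definition acyclic_graph :: "'a set set \<Rightarrow> bool" where
  "acyclic_graph E \<longleftrightarrow> simple_graph_edges E \<and> \<not> (\<exists>vs. is_cycle E vs)"

definition line_graph_edges :: "'a set set \<Rightarrow> 'a set set set" where
  "line_graph_edges E = {{e, f} | e f. e \<in> E \<and> f \<in> E \<and> e \<noteq> f \<and> e \<inter> f \<noteq> {}}"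

definition feasible_forest_pair :: "nat \<Rightarrow> nat \<Rightarrow> bool" where
  "feasible_forest_pair N M \<longleftrightarrow>
     (\<exists>E :: nat set set. acyclic_graph E \<and> card E = N \<and> card (line_graph_edges E) = M)"

definition non_feasible_forest_pair :: "nat \<Rightarrow> nat \<Rightarrow> bool" where
  "non_feasible_forest_pair N M \<longleftrightarrow> M \<le> N choose 2 \<and> \<not> feasible_forest_pair N M"

end

theory Submission
  imports Defs "HOL-Library.Discrete_Functions"
begin

(* Write C(n) for n choose 2 and let t = floor(sqrt N). In a forest with N edges, a vertex of
   degree d contributes C(d) line-graph edges, and an edge avoiding it meets at most one of its
   edges (a second one would close a triangle), so there are at most C(d) + C(N - d + 1) line-graph
   edges; by convexity this is at most C(t + 1) + C(N - t) when t < d <= N - t. A vertex of degree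
   d > N - t already gives more than C(N - t) + C(t + 1) + 1 line-graph edges, and if all degrees
   are at most t there are at most 2tN of them. Hence M = C(N - t) + C(t + 1) + 1, which is
   N^2/2 - Theta(N sqrt N), is not attained.
   Conversely every m < C(N - 6t - 2) is attained by vertex-disjoint stars: greedily
   m = C(a) + C(b) + c with c < b, where b = O(sqrt N), so stars with a, b and c times 2 edges,
   padded with isolated edges, use exactly N edges. *)

lemma choose2_Suc: "Suc n choose 2 = (n choose 2) + n"
  using binomial_Suc_Suc[of n 1] by (simp add: numeral_2_eq_2)

lemma two_mult_choose2: "2 * (n choose 2) = n * (n - 1)"
proof (induction n)
  case (Suc n)
  then show ?case by (cases n) (auto simp: choose2_Suc algebra_simps)
qed simp

lemma of_nat_choose2: "2 * of_nat (n choose 2) = (of_nat n * (of_nat n - 1) :: 'a :: comm_ring_1)"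
proof -
  have "of_nat (2 * (n choose 2)) = (of_nat (n * (n - 1)) :: 'a)"
    by (simp only: two_mult_choose2)
  then show ?thesis by (cases n) (simp_all add: algebra_simps)
qed

lemma ex_choose2_bracket: "\<exists>a. a choose 2 \<le> m \<and> m < Suc a choose 2"
proof (induction m)
  case 0
  show ?case by (rule exI[of _ 1]) (simp add: choose2_Suc)
next
  case (Suc m)
  then obtain a where a: "a choose 2 \<le> m" "m < Suc a choose 2" by blast
  show ?case
  proof (cases "Suc m = Suc a choose 2")
    case True
    then show ?thesis by (intro exI[of _ "Suc a"]) (simp add: choose2_Suc[of "Suc a"])
  next
    case False
    then show ?thesis using a by (intro exI[of _ a]) simp
  qed
qed

definition incident_edges :: "'a set set \<Rightarrow> 'a \<Rightarrow> 'a set set" where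
  "incident_edges E v = {e \<in> E. v \<in> e}"

lemma line_graph_edges_mono: "E \<subseteq> F \<Longrightarrow> line_graph_edges E \<subseteq> line_graph_edges F"
  unfolding line_graph_edges_def by blast

lemma line_graph_edges_subset_pairs: "line_graph_edges E \<subseteq> {X. X \<subseteq> E \<and> card X = 2}"
proof
  fix X assume "X \<in> line_graph_edges E"
  then obtain e f where "X = {e, f}" "e \<noteq> f" "e \<in> E" "f \<in> E"
    unfolding line_graph_edges_def by blast
  then show "X \<in> {X. X \<subseteq> E \<and> card X = 2}" by simp
qed

lemma finite_line_graph_edges:
  assumes "finite E"
  shows "finite (line_graph_edges E)"
  by (rule finite_subset[OF line_graph_edges_subset_pairs finite_subset[of _ "Pow E"]])
    (use assms in auto)

lemma card_line_graph_edges_le: "finite E \<Longrightarrow> card (line_graph_edges E) \<le> card E choose 2"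
  using card_mono[OF _ line_graph_edges_subset_pairs] n_subsets by fastforce

lemma card_line_graph_edges_common_vertex:
  assumes "finite E" and "\<And>e. e \<in> E \<Longrightarrow> v \<in> e"
  shows "card (line_graph_edges E) = card E choose 2"
proof -
  have "{X. X \<subseteq> E \<and> card X = 2} \<subseteq> line_graph_edges E"
  proof
    fix X assume "X \<in> {X. X \<subseteq> E \<and> card X = 2}"
    then obtain e f where "X = {e, f}" "e \<noteq> f" "e \<in> E" "f \<in> E" by (auto simp: card_2_iff)
    then show "X \<in> line_graph_edges E" using assms(2) unfolding line_graph_edges_def by blast
  qed
  then have "line_graph_edges E = {X. X \<subseteq> E \<and> card X = 2}"
    using line_graph_edges_subset_pairs by blast
  then show ?thesis using n_subsets[OF assms(1)] by simp
qed

lemma degree_choose2_le_card_line_graph_edges: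
  assumes "finite E"
  shows "card (incident_edges E v) choose 2 \<le> card (line_graph_edges E)"
proof -
  have "card (incident_edges E v) choose 2 = card (line_graph_edges (incident_edges E v))"
    using assms by (intro card_line_graph_edges_common_vertex[symmetric]) (auto simp: incident_edges_def)
  also have "\<dots> \<le> card (line_graph_edges E)"
    using assms by (intro card_mono finite_line_graph_edges line_graph_edges_mono)
      (auto simp: incident_edges_def)
  finally show ?thesis .
qed

lemma line_graph_edges_Un_subset:
  "line_graph_edges (A \<union> B)
    \<subseteq> line_graph_edges A \<union> line_graph_edges B \<union> (\<Union>f\<in>B. (\<lambda>e. {e, f}) ` {e \<in> A. e \<inter> f \<noteq> {}})"
proof
  fix X assume "X \<in> line_graph_edges (A \<union> B)"
  then obtain e f where X: "X = {e, f}" "e \<in> A \<union> B" "f \<in> A \<union> B" "e \<noteq> f" "e \<inter> f \<noteq> {}"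
    unfolding line_graph_edges_def by blast
  then have "X = {f, e}" "f \<inter> e \<noteq> {}" by auto
  consider "e \<in> A" "f \<in> A" | "e \<in> B" "f \<in> B" | "e \<in> A" "f \<in> B" | "e \<in> B" "f \<in> A"
    using X by blast
  then show "X \<in> line_graph_edges A \<union> line_graph_edges B
      \<union> (\<Union>f\<in>B. (\<lambda>e. {e, f}) ` {e \<in> A. e \<inter> f \<noteq> {}})"
  proof cases
    case 1
    then show ?thesis using X unfolding line_graph_edges_def by blast
  next
    case 2
    then show ?thesis using X unfolding line_graph_edges_def by blast
  next
    case 3
    then show ?thesis using X by blast
  next
    case 4
    then show ?thesis using \<open>X = {f, e}\<close> \<open>f \<inter> e \<noteq> {}\<close> by blast
  qed
qed

lemma line_graph_edges_Un_vertex_disjoint: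
  assumes "\<And>e f. e \<in> A \<Longrightarrow> f \<in> B \<Longrightarrow> e \<inter> f = {}"
  shows "line_graph_edges (A \<union> B) = line_graph_edges A \<union> line_graph_edges B"
  using line_graph_edges_Un_subset[of A B] line_graph_edges_mono[of A "A \<union> B"]
    line_graph_edges_mono[of B "A \<union> B"] assms
  by blast

lemma card_line_graph_edges_le_max_degree:
  assumes "simple_graph_edges E" and "\<And>v. card (incident_edges E v) \<le> d"
  shows "card (line_graph_edges E) \<le> card E * (2 * d)"
proof -
  have fin: "finite E" using assms(1) by (simp add: simple_graph_edges_def)
  have "line_graph_edges E \<subseteq> (\<Union>e\<in>E. (\<lambda>f. {e, f}) ` {f \<in> E. f \<inter> e \<noteq> {}})"
    unfolding line_graph_edges_def by blast
  then have "card (line_graph_edges E) \<le> card (\<Union>e\<in>E. (\<lambda>f. {e, f}) ` {f \<in> E. f \<inter> e \<noteq> {}})"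
    using fin by (intro card_mono) auto
  also have "\<dots> \<le> (\<Sum>e\<in>E. card ((\<lambda>f. {e, f}) ` {f \<in> E. f \<inter> e \<noteq> {}}))"
    using fin by (rule card_UN_le)
  also have "\<dots> \<le> (\<Sum>e\<in>E. 2 * d)"
  proof (rule sum_mono)
    fix e assume "e \<in> E"
    then obtain x y where "e = {x, y}"
      using assms(1) by (auto simp: simple_graph_edges_def card_2_iff)
    then have "{f \<in> E. f \<inter> e \<noteq> {}} \<subseteq> incident_edges E x \<union> incident_edges E y"
      by (auto simp: incident_edges_def)
    then have "card {f \<in> E. f \<inter> e \<noteq> {}} \<le> card (incident_edges E x \<union> incident_edges E y)"
      using fin by (intro card_mono) (auto simp: incident_edges_def)
    also have "\<dots> \<le> card (incident_edges E x) + card (incident_edges E y)"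
      by (rule card_Un_le)
    also have "\<dots> \<le> 2 * d" using assms(2)[of x] assms(2)[of y] by simp
    finally show "card ((\<lambda>f. {e, f}) ` {f \<in> E. f \<inter> e \<noteq> {}}) \<le> 2 * d"
      using card_image_le[of "{f \<in> E. f \<inter> e \<noteq> {}}" "\<lambda>f. {e, f}"] fin by simp
  qed
  finally show ?thesis by simp
qed

lemma acyclic_graph_no_triangle:
  assumes "acyclic_graph E" "{u, v} \<in> E" "{v, w} \<in> E" "{w, u} \<in> E"
    and "u \<noteq> v" "v \<noteq> w" "w \<noteq> u"
  shows False
proof -
  have "is_cycle E [u, v, w]"
    unfolding is_cycle_def
  proof (intro conjI allI impI)
    fix i assume "i < length [u, v, w]"
    then have "i = 0 \<or> i = 1 \<or> i = 2" by auto
    then show "{[u, v, w] ! i, [u, v, w] ! ((i + 1) mod length [u, v, w])} \<in> E"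
      using assms by auto
  qed (use assms in auto)
  then show False using assms(1) by (auto simp: acyclic_graph_def)
qed

lemma acyclic_graph_card_incident_edges_meeting_le_1:
  assumes ac: "acyclic_graph E" and f: "f \<in> E" "v \<notin> f"
  shows "card {e \<in> incident_edges E v. e \<inter> f \<noteq> {}} \<le> 1"
proof -
  have two: "card e = 2" if "e \<in> E" for e
    using ac that by (simp add: acyclic_graph_def simple_graph_edges_def)
  have eq: "e1 = e2" if e1: "e1 \<in> incident_edges E v" "e1 \<inter> f \<noteq> {}"
    and e2: "e2 \<in> incident_edges E v" "e2 \<inter> f \<noteq> {}" for e1 e2
  proof (rule ccontr)
    assume ne: "e1 \<noteq> e2"
    obtain x1 where x1: "e1 = {v, x1}" "x1 \<noteq> v"
      using e1 two by (auto simp: incident_edges_def card_2_iff)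
    obtain x2 where x2: "e2 = {v, x2}" "x2 \<noteq> v"
      using e2 two by (auto simp: incident_edges_def card_2_iff)
    have "x1 \<in> f" "x2 \<in> f" "x1 \<noteq> x2" using e1 e2 x1 x2 f ne by auto
    then have "f = {x1, x2}" using two[OF f(1)] by (auto simp: card_2_iff)
    then show False
      using acyclic_graph_no_triangle[OF ac, of v x1 x2] e1 e2 x1 x2 f \<open>x1 \<noteq> x2\<close>
      by (auto simp: incident_edges_def insert_commute)
  qed
  have fin: "finite {e \<in> incident_edges E v. e \<inter> f \<noteq> {}}"
    using ac by (simp add: acyclic_graph_def simple_graph_edges_def incident_edges_def)
  have "card {e \<in> incident_edges E v. e \<inter> f \<noteq> {}} \<le> Suc 0"
    unfolding card_le_Suc0_iff_eq[OF fin] using eq by blast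
  then show ?thesis by simp
qed

lemma card_line_graph_edges_acyclic_le:
  fixes E :: "'a set set" and v :: 'a
  assumes ac: "acyclic_graph E"
  defines "d \<equiv> card (incident_edges E v)"
  shows "card (line_graph_edges E) \<le> (d choose 2) + ((card E - d) choose 2) + (card E - d)"
proof -
  define R where "R = E - incident_edges E v"
  define C where "C = (\<Union>f\<in>R. (\<lambda>e. {e, f}) ` {e \<in> incident_edges E v. e \<inter> f \<noteq> {}})"
  have fin: "finite E" using ac by (simp add: acyclic_graph_def simple_graph_edges_def)
  then have fin': "finite (incident_edges E v)" "finite R"
    by (simp_all add: incident_edges_def R_def)
  have card_R: "card R = card E - d"
    unfolding R_def d_def by (rule card_Diff_subset) (use fin' in \<open>auto simp: incident_edges_def\<close>)
  have "incident_edges E v \<union> R = E" by (auto simp: R_def incident_edges_def)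
  then have "line_graph_edges E \<subseteq> line_graph_edges (incident_edges E v) \<union> line_graph_edges R \<union> C"
    using line_graph_edges_Un_subset[of "incident_edges E v" R] unfolding C_def by simp
  then have "card (line_graph_edges E)
      \<le> card (line_graph_edges (incident_edges E v) \<union> line_graph_edges R \<union> C)"
    using fin' by (intro card_mono) (auto simp: C_def finite_line_graph_edges)
  also have "\<dots> \<le> card (line_graph_edges (incident_edges E v)) + card (line_graph_edges R) + card C"
    by (meson card_Un_le add_le_mono order_trans order_refl)
  also have "card (line_graph_edges (incident_edges E v)) = d choose 2"
    unfolding d_def by (rule card_line_graph_edges_common_vertex) (auto simp: fin incident_edges_def)
  also have "card (line_graph_edges R) \<le> card R choose 2"
    by (rule card_line_graph_edges_le[OF fin'(2)])
  also have "card C \<le> (\<Sum>f\<in>R. card ((\<lambda>e. {e, f}) ` {e \<in> incident_edges E v. e \<inter> f \<noteq> {}}))"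
    unfolding C_def using fin' by (intro card_UN_le)
  also have "\<dots> \<le> (\<Sum>f\<in>R. 1)"
  proof (rule sum_mono)
    fix f assume "f \<in> R"
    then have "card {e \<in> incident_edges E v. e \<inter> f \<noteq> {}} \<le> 1"
      by (intro acyclic_graph_card_incident_edges_meeting_le_1[OF ac]) (auto simp: R_def incident_edges_def)
    then show "card ((\<lambda>e. {e, f}) ` {e \<in> incident_edges E v. e \<inter> f \<noteq> {}}) \<le> 1"
      using card_image_le[of "{e \<in> incident_edges E v. e \<inter> f \<noteq> {}}" "\<lambda>e. {e, f}"] fin' by simp
  qed
  finally show ?thesis using card_R by simp
qed

(* At the largest vertex of a cycle, both cycle edges through it have it as their maximum. *)
lemma acyclic_graph_if_Max_unique:
  fixes E :: "'a :: linorder set set"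
  assumes sg: "simple_graph_edges E"
    and Max_unique: "\<And>e f. e \<in> E \<Longrightarrow> f \<in> E \<Longrightarrow> Max e \<in> f \<Longrightarrow> e = f"
  shows "acyclic_graph E"
  unfolding acyclic_graph_def
proof (intro conjI sg notI)
  assume "\<exists>vs. is_cycle E vs"
  then obtain vs where "is_cycle E vs" by blast
  define n where "n = length vs"
  have n3: "n \<ge> 3" and dist: "distinct vs"
    and edge: "\<And>i. i < n \<Longrightarrow> {vs ! i, vs ! ((i + 1) mod n)} \<in> E"
    using \<open>is_cycle E vs\<close> by (auto simp: is_cycle_def n_def)
  define y where "y = Max (set vs)"
  have "y \<in> set vs" unfolding y_def using n3 n_def by (intro Max_in) auto
  then obtain i where i: "i < n" "vs ! i = y" by (auto simp: in_set_conv_nth n_def)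
  define j where "j = (if i = n - 1 then 0 else i + 1)"
  define k where "k = (if i = 0 then n - 1 else i - 1)"
  have j: "j < n" "j = (i + 1) mod n" using i(1) n3 by (auto simp: j_def)
  have k: "k < n" "i = (k + 1) mod n" using i(1) n3 by (auto simp: k_def)
  have "j \<noteq> k" "j \<noteq> i" using i(1) n3 by (auto simp: j_def k_def)
  then have ne: "vs ! j \<noteq> y" "vs ! j \<noteq> vs ! k"
    using dist i j(1) k(1) n_def by (auto simp: nth_eq_iff_index_eq)
  have out: "{y, vs ! j} \<in> E" using edge[OF i(1)] i j by simp
  have into: "{vs ! k, y} \<in> E" using edge[OF k(1)] i k by simp
  have "vs ! j \<le> y" unfolding y_def using j(1) n_def by simp
  then have "Max {y, vs ! j} \<in> {vs ! k, y}" by (simp add: max_def)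
  then have "{y, vs ! j} = {vs ! k, y}" using Max_unique[OF out into] by blast
  then show False using ne by auto
qed

definition star_edges :: "nat \<Rightarrow> nat \<Rightarrow> nat set set" where
  "star_edges p s = (\<lambda>i. {p, p + i}) ` {1..s}"

fun star_forest :: "nat \<Rightarrow> nat list \<Rightarrow> nat set set" where
  "star_forest p [] = {}"
| "star_forest p (s # ss) = star_edges p s \<union> star_forest (Suc (p + s)) ss"

lemma star_forest_vertex_ge: "e \<in> star_forest p ss \<Longrightarrow> x \<in> e \<Longrightarrow> p \<le> x"
proof (induction ss arbitrary: p)
  case (Cons s ss)
  show ?case
  proof (cases "e \<in> star_edges p s")
    case True
    then show ?thesis using Cons.prems by (auto simp: star_edges_def)
  next
    case False
    then have "Suc (p + s) \<le> x" using Cons by auto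
    then show ?thesis by simp
  qed
qed simp

lemma star_edges_star_forest_disjoint:
  assumes "e \<in> star_edges p s" "f \<in> star_forest (Suc (p + s)) ss"
  shows "e \<inter> f = {}"
proof (rule equals0I)
  fix x assume x: "x \<in> e \<inter> f"
  then have "x \<le> p + s" using assms(1) by (auto simp: star_edges_def)
  moreover have "Suc (p + s) \<le> x" using star_forest_vertex_ge assms(2) x by blast
  ultimately show False by simp
qed

lemma star_edges_Int_star_forest: "star_edges p s \<inter> star_forest (Suc (p + s)) ss = {}"
proof (rule equals0I)
  fix e assume "e \<in> star_edges p s \<inter> star_forest (Suc (p + s)) ss"
  then have "e \<inter> e = {}" "p \<in> e"
    using star_edges_star_forest_disjoint by (blast, auto simp: star_edges_def)
  then show False by blast
qed

lemma simple_graph_edges_star_forest: "simple_graph_edges (star_forest p ss)"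
  by (induction ss arbitrary: p) (auto simp: simple_graph_edges_def star_edges_def)

lemma finite_star_forest: "finite (star_forest p ss)"
  using simple_graph_edges_star_forest by (simp add: simple_graph_edges_def)

lemma card_star_edges: "card (star_edges p s) = s"
  unfolding star_edges_def by (subst card_image) (auto simp: inj_on_def doubleton_eq_iff)

lemma card_star_forest: "card (star_forest p ss) = sum_list ss"
proof (induction ss arbitrary: p)
  case (Cons s ss)
  then show ?case
    using star_edges_Int_star_forest card_star_edges finite_star_forest
    by (simp add: card_Un_disjoint star_edges_def)
qed simp

lemma star_forest_Max_unique:
  "e \<in> star_forest p ss \<Longrightarrow> f \<in> star_forest p ss \<Longrightarrow> Max e \<in> f \<Longrightarrow> e = f"
proof (induction ss arbitrary: p)
  case (Cons s ss)
  let ?R = "star_forest (Suc (p + s)) ss"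
  have Max_star: "Max e \<in> e \<and> Max e \<in> {Suc p..p + s}" if "e \<in> star_edges p s" for e
    using that by (auto simp: star_edges_def max_def)
  have Max_R: "Max e \<in> e" if "e \<in> ?R" for e
  proof -
    have "card e = 2"
      using that simple_graph_edges_star_forest[of "Suc (p + s)" ss] by (simp add: simple_graph_edges_def)
    then obtain x y where "e = {x, y}" by (auto simp: card_2_iff)
    then show ?thesis by (simp add: max_def)
  qed
  consider "e \<in> star_edges p s" "f \<in> star_edges p s" | "e \<in> star_edges p s" "f \<in> ?R"
    | "e \<in> ?R" "f \<in> star_edges p s" | "e \<in> ?R" "f \<in> ?R"
    using Cons.prems(1,2) by auto
  then show ?case
  proof cases
    case 1
    then show ?thesis using Cons.prems(3) Max_star[of e] by (auto simp: star_edges_def)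
  next
    case 2
    then show ?thesis
      using Cons.prems(3) Max_star[of e] star_edges_star_forest_disjoint[of e p s f ss] by blast
  next
    case 3
    then show ?thesis
      using Cons.prems(3) Max_R[of e] star_edges_star_forest_disjoint[of f p s e ss] by blast
  next
    case 4
    then show ?thesis using Cons.IH Cons.prems(3) by blast
  qed
qed simp

lemma card_line_graph_edges_star_forest:
  "card (line_graph_edges (star_forest p ss)) = (\<Sum>s\<leftarrow>ss. s choose 2)"
proof (induction ss arbitrary: p)
  case (Cons s ss)
  let ?S = "star_edges p s" and ?R = "star_forest (Suc (p + s)) ss"
  have fin: "finite ?S" by (simp add: star_edges_def)
  have "line_graph_edges ?S \<inter> line_graph_edges ?R = {}"
  proof (rule equals0I)
    fix X assume "X \<in> line_graph_edges ?S \<inter> line_graph_edges ?R"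
    then have "X \<subseteq> ?S \<inter> ?R" "card X = 2" using line_graph_edges_subset_pairs by blast+
    then show False using star_edges_Int_star_forest by auto
  qed
  moreover have "card (line_graph_edges ?S) = s choose 2"
    using card_line_graph_edges_common_vertex[OF fin, of p] card_star_edges
    by (auto simp: star_edges_def)
  ultimately show ?case
    using Cons.IH line_graph_edges_Un_vertex_disjoint[of ?S ?R] star_edges_star_forest_disjoint
    by (simp add: card_Un_disjoint finite_line_graph_edges fin finite_star_forest)
qed (simp add: line_graph_edges_def)

lemma feasible_forest_pair_star_forest:
  "feasible_forest_pair (sum_list ss) (\<Sum>s\<leftarrow>ss. s choose 2)"
proof -
  have "acyclic_graph (star_forest 0 ss)"
    by (rule acyclic_graph_if_Max_unique[OF simple_graph_edges_star_forest star_forest_Max_unique])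
  then show ?thesis
    unfolding feasible_forest_pair_def using card_star_forest card_line_graph_edges_star_forest
    by blast
qed

lemma choose2_add_choose2_le:
  assumes "k \<le> x" "k \<le> y"
  shows "(x choose 2) + (y choose 2) \<le> (k choose 2) + ((x + y - k) choose 2)"
proof -
  obtain a b where x: "x = k + a" and y: "y = k + b"
    using assms by (metis le_add_diff_inverse)
  define L where "L = (x choose 2) + (y choose 2)"
  define R where "R = (k choose 2) + ((x + y - k) choose 2)"
  have "x + y - k = k + a + b" using x y by simp
  then have "2 * int L + 2 * (int a * int b) = 2 * int R"
    unfolding L_def R_def of_nat_add distrib_left of_nat_choose2 x y
    by (simp add: algebra_simps)
  moreover have "0 \<le> int a * int b" by simp
  ultimately have "int L \<le> int R" by linarith
  then show ?thesis by (simp add: L_def R_def)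
qed

lemma feasible_forest_pair_below:
  assumes N: "A + 3 * u \<le> N" "N \<le> Suc u choose 2" and m: "m < Suc A choose 2"
  shows "feasible_forest_pair N m"
proof -
  obtain a where a: "a choose 2 \<le> m" "m < Suc a choose 2" using ex_choose2_bracket by blast
  have "a \<le> A"
  proof (rule ccontr)
    assume "\<not> a \<le> A"
    then have "Suc A choose 2 \<le> a choose 2" by (intro binomial_right_mono) simp
    then show False using a m by simp
  qed
  define r where "r = m - (a choose 2)"
  have "r < a" using a by (simp add: r_def choose2_Suc)
  obtain b where b: "b choose 2 \<le> r" "r < Suc b choose 2" using ex_choose2_bracket by blast
  have "b \<le> u"
  proof (rule ccontr)
    assume "\<not> b \<le> u"
    then have "Suc u choose 2 \<le> b choose 2" by (intro binomial_right_mono) simp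
    then show False using b \<open>r < a\<close> \<open>a \<le> A\<close> N by simp
  qed
  define c where "c = r - (b choose 2)"
  have "c < b" using b by (simp add: c_def choose2_Suc)
  define ss where "ss = [a, b] @ replicate c 2 @ replicate (N - (a + b + 2 * c)) 1"
  have "sum_list ss = N"
    using \<open>a \<le> A\<close> \<open>b \<le> u\<close> \<open>c < b\<close> N by (simp add: ss_def sum_list_replicate)
  moreover have "(\<Sum>s\<leftarrow>ss. s choose 2) = m"
    using a b by (simp add: ss_def c_def r_def sum_list_replicate)
  ultimately show ?thesis using feasible_forest_pair_star_forest[of ss] by simp
qed

lemma not_feasible_forest_pair_gap:
  assumes M: "M = ((N - t) choose 2) + (Suc t choose 2) + 1"
    and large_degree: "(Suc t choose 2) + 1 < N - t"
    and small_degree: "N * (2 * t) < M"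
  shows "\<not> feasible_forest_pair N M"
proof
  assume "feasible_forest_pair N M"
  then obtain E :: "nat set set"
    where E: "acyclic_graph E" "card E = N" "card (line_graph_edges E) = M"
    unfolding feasible_forest_pair_def by blast
  have sg: "simple_graph_edges E" using E(1) by (simp add: acyclic_graph_def)
  consider (large) v where "N - t < card (incident_edges E v)"
    | (middle) v where "t < card (incident_edges E v)" "card (incident_edges E v) \<le> N - t"
    | (small) "\<And>v. card (incident_edges E v) \<le> t"
    using not_le by blast
  then show False
  proof cases
    case large
    have "Suc (N - t) choose 2 \<le> card (incident_edges E v) choose 2"
      using large by (intro binomial_right_mono) simp
    also have "\<dots> \<le> M"
      using degree_choose2_le_card_line_graph_edges[of E v] sg E(3) by (simp add: simple_graph_edges_def)
    finally show False using M large_degree by (simp add: choose2_Suc)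
  next
    case middle
    define d where "d = card (incident_edges E v)"
    have "M \<le> (d choose 2) + ((N - d) choose 2) + (N - d)"
      using card_line_graph_edges_acyclic_le[OF E(1), of v] E(2,3) by (simp add: d_def)
    also have "\<dots> = (d choose 2) + (Suc (N - d) choose 2)" by (simp add: choose2_Suc)
    also have "\<dots> \<le> (Suc t choose 2) + ((d + Suc (N - d) - Suc t) choose 2)"
      using middle by (intro choose2_add_choose2_le) (simp_all add: d_def)
    also have "d + Suc (N - d) - Suc t = N - t" using middle by (simp add: d_def)
    finally show False using M by simp
  next
    case small
    show False using card_line_graph_edges_le_max_degree[OF sg small] E small_degree by simp
  qed
qed

lemma non_feasible_forest_pair_sqrt:
  fixes N t :: nat
  assumes t: "t ^ 2 \<le> N" "7 \<le> t"
  defines "M \<equiv> ((N - t) choose 2) + (Suc t choose 2) + 1"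
  shows "non_feasible_forest_pair N M" and "2 * M + N * t + N \<le> N ^ 2"
proof -
  have tt: "7 * t \<le> t * t" using t(2) by (intro mult_right_mono) simp_all
  have tN: "t * t \<le> N" using t(1) by (simp add: power2_eq_square)
  have "t \<le> N" using tN tt by linarith
  have two_choose: "2 * (Suc t choose 2) = t * t + t"
    using two_mult_choose2[of "Suc t"] by simp
  have "2 * int M + 2 * (int N * int t) + int N = int N * int N + 2 * (int t * int t) + 2 * int t + 2"
    unfolding M_def of_nat_add distrib_left of_nat_choose2 of_nat_diff[OF \<open>t \<le> N\<close>]
    by (simp add: algebra_simps)
  then have two_M: "2 * M + 2 * (N * t) + N = N * N + 2 * (t * t) + 2 * t + 2"
    by (simp flip: of_nat_mult)
  have large_degree: "(Suc t choose 2) + 1 < N - t"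
    using two_choose tN tt t(2) by linarith
  have "N * (6 * t + 2) \<le> N * N"
    using tN tt t(2) by (intro mult_left_mono) linarith+
  then have small_degree: "N * (2 * t) < M"
    using two_M by (simp add: algebra_simps)
  have "M < Suc (N - t) choose 2" using large_degree by (simp add: M_def choose2_Suc)
  also have "\<dots> \<le> N choose 2" using large_degree t(2) by (intro binomial_right_mono) simp
  finally show "non_feasible_forest_pair N M"
    unfolding non_feasible_forest_pair_def
    using not_feasible_forest_pair_gap[OF M_def[THEN meta_eq_to_obj_eq] large_degree small_degree] by simp
  have "t * t * t \<le> N * t" using mult_right_mono[OF tN] by simp
  moreover have "7 * (t * t) \<le> t * t * t" using mult_right_mono[OF t(2), of "t * t"] by (simp add: mult.assoc)
  ultimately show "2 * M + N * t + N \<le> N ^ 2"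
    using two_M tt t(2) unfolding power2_eq_square by linarith
qed

lemma feasible_forest_pair_below_sqrt:
  fixes N t :: nat
  assumes t: "t ^ 2 \<le> N" "N < (Suc t) ^ 2" "7 \<le> t"
  defines "L \<equiv> Suc (N - (6 * t + 3)) choose 2"
  shows "\<And>m. m < L \<Longrightarrow> feasible_forest_pair N m" and "N ^ 2 \<le> 2 * L + 14 * (N * t)"
proof -
  define A where "A = N - (6 * t + 3)"
  have L: "L = Suc A choose 2" by (simp add: L_def A_def)
  have tt: "7 * t \<le> t * t" using t(3) by (intro mult_right_mono) simp_all
  have tN: "t * t \<le> N" "N < t * t + 2 * t + 1" using t(1,2) by (simp_all add: power2_eq_square)
  then have N: "N = A + (6 * t + 3)" using tt t(3) unfolding A_def by linarith
  have "2 * (Suc (2 * t + 1) choose 2) = 4 * (t * t) + 6 * t + 2"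
    using two_mult_choose2[of "Suc (2 * t + 1)"] by (simp add: algebra_simps)
  then have "N \<le> Suc (2 * t + 1) choose 2" using tN by linarith
  then show "\<And>m. m < L \<Longrightarrow> feasible_forest_pair N m"
    using feasible_forest_pair_below[of A "2 * t + 1" N] N by (simp add: L)
  have "N * N \<le> A * A + 12 * (N * t) + 6 * N"
    using N by (simp add: algebra_simps)
  moreover have "A * A \<le> 2 * L"
    using two_mult_choose2[of "Suc A"] by (simp add: L)
  moreover have "7 * N \<le> N * t" using t(3) by simp
  ultimately show "N ^ 2 \<le> 2 * L + 14 * (N * t)"
    unfolding power2_eq_square by linarith
qed

lemma Least_non_feasible_forest_pair_between:
  assumes "non_feasible_forest_pair N M" and "\<And>m. m < L \<Longrightarrow> feasible_forest_pair N m"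
  shows "L \<le> (LEAST M. non_feasible_forest_pair N M)" and "(LEAST M. non_feasible_forest_pair N M) \<le> M"
proof -
  show "(LEAST M. non_feasible_forest_pair N M) \<le> M" using assms(1) by (rule Least_le)
  have "non_feasible_forest_pair N (LEAST M. non_feasible_forest_pair N M)"
    using assms(1) by (rule LeastI)
  then show "L \<le> (LEAST M. non_feasible_forest_pair N M)"
    using assms(2) unfolding non_feasible_forest_pair_def by (meson not_le)
qed

lemma Least_non_feasible_forest_pair_bounds:
  assumes "49 \<le> N"
  shows "(\<exists>M. non_feasible_forest_pair N M) \<and>
    real N ^ 2 / 2 - 7 * real N * sqrt (real N) \<le> real (LEAST M. non_feasible_forest_pair N M) \<and>
    real (LEAST M. non_feasible_forest_pair N M) \<le> real N ^ 2 / 2 - 1 / 2 * real N * sqrt (real N)"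
proof -
  define t where "t = floor_sqrt N"
  have t: "t ^ 2 \<le> N" "N < (Suc t) ^ 2" "7 \<le> t"
    using assms floor_sqrt_power2_le Suc_floor_sqrt_power2_gt le_floor_sqrtI[of 7 N]
    by (simp_all add: t_def)
  define M where "M = ((N - t) choose 2) + (Suc t choose 2) + 1"
  define L where "L = Suc (N - (6 * t + 3)) choose 2"
  note non_feasible = non_feasible_forest_pair_sqrt(1,2)[OF t(1,3), folded M_def]
  note feasible = feasible_forest_pair_below_sqrt(1,2)[OF t, folded L_def]
  define least where "least = (LEAST M. non_feasible_forest_pair N M)"
  have least: "L \<le> least" "least \<le> M"
    using Least_non_feasible_forest_pair_between[OF non_feasible(1) feasible(1)] by (simp_all add: least_def)
  have "real (t ^ 2) \<le> real N" "real N < real (Suc t ^ 2)"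
    using t(1,2) by (simp_all only: of_nat_le_iff of_nat_less_iff)
  then have sqrt: "real t \<le> sqrt (real N)" "sqrt (real N) < real t + 1"
    by (auto intro!: real_le_rsqrt real_less_lsqrt simp: add.commute)
  have "real N * real t \<le> real N * sqrt (real N)" "real N * sqrt (real N) \<le> real N * (real t + 1)"
    using sqrt by (simp_all add: mult_left_mono)
  moreover have "real N ^ 2 \<le> 2 * real L + 14 * (real N * real t)"
    using feasible(2) by (simp flip: of_nat_mult of_nat_power of_nat_le_iff)
  moreover have "2 * real M + real N * real t + real N \<le> real N ^ 2"
    using non_feasible(2) by (simp flip: of_nat_mult of_nat_power of_nat_le_iff)
  ultimately show ?thesis
    using non_feasible(1) least unfolding least_def[symmetric] by (auto simp: algebra_simps)
qed

theorem mainTheorem5: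
  shows "\<exists>c0 c1 :: real. c0 \<ge> c1 \<and> c1 > 0 \<and>
    (\<exists>N0. \<forall>N \<ge> N0.
       (\<exists>M. non_feasible_forest_pair N M) \<and>
       real N ^ 2 / 2 - c0 * real N * sqrt (real N)
         \<le> real (LEAST M. non_feasible_forest_pair N M) \<and>
       real (LEAST M. non_feasible_forest_pair N M)
         \<le> real N ^ 2 / 2 - c1 * real N * sqrt (real N))"
  using Least_non_feasible_forest_pair_bounds
  by (intro exI[of _ 7] exI[of _ "1 / 2"] conjI exI[of _ 49]) auto

end
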